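(* Let $n_w\ge 1$, $i\ge 0$ and $w\ge 1$ be integers, and let $c_1,\dots,c_{n_w}$ be distinct symbols (clusters). Let $G$ be the directed graph (the pruned configuration graph) whose nodes are the pairs $(idx, C)$ with $1\le idx\le n_w+1$, $C\subseteq\{c_x \mid \max(1,idx-2i-2w+1)\le x<idx\}$ and $|C|\le i+w$, and whose edges are: left edges $(idx,C)\to(idx+1,C)$ for $idx\le n_w$; right edges $(idx,C)\to(idx+1,C\cup\{c_{idx}\})$ for $idx\le n_w$ whenever the target is a node; and horizontal edges $(idx,C)\to(idx,C\setminus\{c\})$ for $c\in C$. Then $G$ has at most $(n_w+1)2^{2i+2w-1}$ nodes and at most $(i+w+1)(n_w+1)2^{2i+2w-1}$ edges.
   Context: This graph represents the states $(idx, C_{buf})$ of a search for an ordering of clusters: $idx$ is the index of the next cluster to be processed and $C$ is the set of buffered (not yet placed) clusters; left edges place $c_{idx}$, right edges buffer $c_{idx}$, horizontal edges place a buffered cluster. *)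

theory Defs
  imports Main
begin

definition window :: "nat \<Rightarrow> nat \<Rightarrow> nat \<Rightarrow> nat set" where
  "window i w idx = {x. max 1 (int idx - 2 * int i - 2 * int w + 1) \<le> int x \<and> x < idx}"

definition config_nodes :: "(nat \<Rightarrow> 'a) \<Rightarrow> nat \<Rightarrow> nat \<Rightarrow> nat \<Rightarrow> (nat \<times> 'a set) set" where
  "config_nodes c nw i w =
     {(idx, C). 1 \<le> idx \<and> idx \<le> nw + 1 \<and> C \<subseteq> c ` window i w idx \<and> card C \<le> i + w}"

definition config_edges :: "(nat \<Rightarrow> 'a) \<Rightarrow> nat \<Rightarrow> nat \<Rightarrow> nat \<Rightarrow> ((nat \<times> 'a set) \<times> (nat \<times> 'a set)) set" where
  "config_edges c nw i w =
     {((idx, C), (idx', C')). (idx, C) \<in> config_nodes c nw i w \<and> (idx', C') \<in> config_nodes c nw i w \<and>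
        ((idx \<le> nw \<and> idx' = idx + 1 \<and> C' = C) \<or>
         (idx \<le> nw \<and> idx' = idx + 1 \<and> C' = C \<union> {c idx}) \<or>
         (idx' = idx \<and> (\<exists>x\<in>C. C' = C - {x})))}"

end

theory Submission
  imports Defs
begin

text \<open>A node at position idx is a subset of the at most
  2i + 2w - 1 clusters of its window, which gives the node bound. A node (idx, C) has at most
  card C horizontal successors plus one left and one right successor; when card C = i + w the
  right successor would have i + w + 1 elements, because injectivity of c keeps c idx out of the
  window strictly below idx. So every out-degree is at most i + w + 1.\<close>

lemma card_Sigma_le_mult:
  assumes "finite A" and "\<And>a. a \<in> A \<Longrightarrow> card (B a) \<le> k"
  shows "card (Sigma A B) \<le> card A * k"
proof (cases "\<forall>a\<in>A. finite (B a)")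
  case True
  then have "card (Sigma A B) = (\<Sum>a\<in>A. card (B a))"
    using assms(1) by (rule card_SigmaI[rotated])
  also have "\<dots> \<le> card A * k"
    using sum_bounded_above[of A "\<lambda>a. card (B a)" k] assms(2) by simp
  finally show ?thesis .
next
  case False
  then obtain a where "a \<in> A" and "infinite (B a)"
    by blast
  then have "infinite ({a} \<times> B a)"
    by (auto dest: finite_cartesian_productD2)
  moreover have "{a} \<times> B a \<subseteq> Sigma A B"
    using \<open>a \<in> A\<close> by blast
  ultimately have "infinite (Sigma A B)"
    using finite_subset by blast
  then show ?thesis by simp
qed

lemma Sigma_Image_eq: "E \<subseteq> A \<times> UNIV \<Longrightarrow> Sigma A (\<lambda>a. E `` {a}) = E"
  by auto

lemma window_subset: "window i w idx \<subseteq> {idx + 1 - (2 * i + 2 * w) ..< idx}"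
  unfolding window_def by auto

lemma finite_window: "finite (window i w idx)"
  using window_subset by (rule finite_subset) simp

lemma card_image_window_le: "card (c ` window i w idx) \<le> 2 * i + 2 * w - 1"
proof -
  have "card (c ` window i w idx) \<le> card (window i w idx)"
    using finite_window by (rule card_image_le)
  also have "\<dots> \<le> card {idx + 1 - (2 * i + 2 * w) ..< idx}"
    using window_subset by (intro card_mono) auto
  finally show ?thesis by simp
qed

lemma config_nodes_subset:
  "config_nodes c nw i w \<subseteq> (SIGMA idx:{1..nw + 1}. Pow (c ` window i w idx))"
  unfolding config_nodes_def by auto

lemma finite_config_nodes: "finite (config_nodes c nw i w)"
  using config_nodes_subset by (rule finite_subset) (simp add: finite_window)

lemma card_config_nodes_le: "card (config_nodes c nw i w) \<le> (nw + 1) * 2 ^ (2 * i + 2 * w - 1)"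
proof -
  have "card (config_nodes c nw i w) \<le> card (SIGMA idx:{1..nw + 1}. Pow (c ` window i w idx))"
    using config_nodes_subset by (rule card_mono[rotated]) (simp add: finite_window)
  also have "\<dots> \<le> card {1..nw + 1} * 2 ^ (2 * i + 2 * w - 1)"
  proof (rule card_Sigma_le_mult)
    fix idx
    show "card (Pow (c ` window i w idx)) \<le> 2 ^ (2 * i + 2 * w - 1)"
      using finite_window card_image_window_le by (simp add: card_Pow power_increasing)
  qed simp
  finally show ?thesis by simp
qed

lemma config_successors_subset:
  "config_edges c nw i w `` {(idx, C)} \<subseteq>
     {(idx + 1, C), (idx + 1, insert (c idx) C)} \<union> (\<lambda>x. (idx, C - {x})) ` C"
  unfolding config_edges_def by auto

lemma cluster_notin_buffer:
  assumes "inj_on c {1..nw}" and "idx \<le> nw" and "C \<subseteq> c ` window i w idx"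
  shows "c idx \<notin> C"
proof
  assume "c idx \<in> C"
  then obtain x where "x \<in> window i w idx" and "c idx = c x"
    using assms(3) by auto
  moreover from \<open>x \<in> window i w idx\<close> have "1 \<le> x" "x < idx"
    by (auto simp: window_def)
  ultimately show False
    using assms(1,2) by (auto dest: inj_onD)
qed

lemma config_successors_subset_full:
  assumes "inj_on c {1..nw}" and "(idx, C) \<in> config_nodes c nw i w" and "card C = i + w"
  shows "config_edges c nw i w `` {(idx, C)} \<subseteq> insert (idx + 1, C) ((\<lambda>x. (idx, C - {x})) ` C)"
proof -
  have "(idx + 1, insert (c idx) C) \<notin> config_nodes c nw i w" if "idx \<le> nw"
  proof -
    have "C \<subseteq> c ` window i w idx"
      using assms(2) by (simp add: config_nodes_def)
    with assms(1) that have "c idx \<notin> C"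
      by (rule cluster_notin_buffer)
    moreover have "finite C"
      using finite_window \<open>C \<subseteq> c ` window i w idx\<close> by (rule finite_surj)
    ultimately show ?thesis
      using assms(3) by (simp add: config_nodes_def)
  qed
  then show ?thesis
    unfolding config_edges_def by auto
qed

lemma card_config_successors_le:
  assumes "inj_on c {1..nw}" and "v \<in> config_nodes c nw i w"
  shows "card (config_edges c nw i w `` {v}) \<le> i + w + 1"
proof -
  obtain idx C where v: "v = (idx, C)"
    by fastforce
  let ?H = "(\<lambda>x. (idx, C - {x})) ` C"
  have "C \<subseteq> c ` window i w idx" and "card C \<le> i + w"
    using assms(2) by (simp_all add: v config_nodes_def)
  then have "finite C"
    using finite_window by (blast intro: finite_surj)
  then have "finite ?H" and "card ?H \<le> card C"
    by (simp_all add: card_image_le)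
  show ?thesis
  proof (cases "card C = i + w")
    case True
    have "card (config_edges c nw i w `` {v}) \<le> card (insert (idx + 1, C) ?H)"
      using config_successors_subset_full[OF assms(1) assms(2)[unfolded v] True]
      by (intro card_mono) (simp_all add: v \<open>finite ?H\<close>)
    also have "\<dots> \<le> card C + 1"
      using \<open>finite ?H\<close> \<open>card ?H \<le> card C\<close> by (simp add: card_insert_if)
    finally show ?thesis
      using True by simp
  next
    case False
    have "card (config_edges c nw i w `` {v})
        \<le> card ({(idx + 1, C), (idx + 1, insert (c idx) C)} \<union> ?H)"
      using config_successors_subset by (intro card_mono) (simp_all add: v \<open>finite ?H\<close>)
    also have "\<dots> \<le> card {(idx + 1, C), (idx + 1, insert (c idx) C)} + card ?H"
      by (rule card_Un_le)
    also have "\<dots> \<le> 2 + card C"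
      using \<open>card ?H \<le> card C\<close> by (simp add: card_insert_if)
    finally show ?thesis
      using False \<open>card C \<le> i + w\<close> by simp
  qed
qed

theorem lemma3:
  fixes c :: "nat \<Rightarrow> 'a" and nw i w :: nat
  assumes "nw \<ge> 1" and "w \<ge> 1"
    and "inj_on c {1..nw}"
  shows "card (config_nodes c nw i w) \<le> (nw + 1) * 2 ^ (2 * i + 2 * w - 1) \<and>
         card (config_edges c nw i w) \<le> (i + w + 1) * (nw + 1) * 2 ^ (2 * i + 2 * w - 1)"
proof
  show "card (config_nodes c nw i w) \<le> (nw + 1) * 2 ^ (2 * i + 2 * w - 1)"
    by (rule card_config_nodes_le)
  have "config_edges c nw i w \<subseteq> config_nodes c nw i w \<times> UNIV"
    unfolding config_edges_def by auto
  then have "card (config_edges c nw i w)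
      = card (SIGMA v:config_nodes c nw i w. config_edges c nw i w `` {v})"
    by (simp add: Sigma_Image_eq)
  also have "\<dots> \<le> card (config_nodes c nw i w) * (i + w + 1)"
    using finite_config_nodes card_config_successors_le[OF assms(3)]
    by (rule card_Sigma_le_mult)
  also have "\<dots> \<le> (nw + 1) * 2 ^ (2 * i + 2 * w - 1) * (i + w + 1)"
    using card_config_nodes_le by (rule mult_le_mono1)
  finally show "card (config_edges c nw i w) \<le> (i + w + 1) * (nw + 1) * 2 ^ (2 * i + 2 * w - 1)"
    by (simp only: ac_simps)
qed

end
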